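(* Let $p$ be an odd prime and let $L$ be a $\mathbb{Z}_p$-Lie lattice with soluble radical $R$. Then $R$ is isolated, i.e. $R=\mathrm{iso}_L(R)$. Moreover, if $L$ is saturable, then $R$ is PF-embedded in $L$.
   Context: A $\mathbb{Z}_p$-Lie lattice is a Lie algebra over $\mathbb{Z}_p$ free of finite rank as a module. Its soluble radical is its unique maximal soluble Lie ideal. For a Lie sublattice $M$ of $L$, $\mathrm{iso}_L(M)=L\cap(\mathbb{Q}_p\otimes M)$. For an ideal $M$ of $L$, a potent filtration of $M$ in $L$ is a descending series $(M_i)$ of ideals of $L$ with $M_1=M$, $\bigcap M_i=0$, $[M_i,L]\subseteq M_{i+1}$, $[M_i,L,\ldots,L]\subseteq pM_{i+1}$ ($p-1$ copies of $L$, left-normed); $M$ is PF-embedded if one exists; $L$ is saturable iff it admits a potent filtration of itself. *)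

theory Defs
  imports "HOL-Computational_Algebra.Primes"
begin

section \<open>The p-adic integers Z_p as compatible residue sequences\<close>

type_synonym padic = "nat \<Rightarrow> int"

definition padic_set :: "int \<Rightarrow> padic set" where
  "padic_set p = {f. \<forall>k. 0 \<le> f k \<and> f k < p ^ k \<and> f k = f (Suc k) mod p ^ k}"

definition padd :: "int \<Rightarrow> padic \<Rightarrow> padic \<Rightarrow> padic" where
  "padd p f g = (\<lambda>k. (f k + g k) mod p ^ k)"

definition pmul :: "int \<Rightarrow> padic \<Rightarrow> padic \<Rightarrow> padic" where
  "pmul p f g = (\<lambda>k. (f k * g k) mod p ^ k)"

definition pint :: "int \<Rightarrow> int \<Rightarrow> padic" where
  "pint p a = (\<lambda>k. a mod p ^ k)"

section \<open>The free Z_p-module Z_p^n (every Z_p-lattice of rank n is isomorphic to one)\<close>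

type_synonym zpvec = "nat \<Rightarrow> padic"

definition lat :: "int \<Rightarrow> nat \<Rightarrow> zpvec set" where
  "lat p n = {x. (\<forall>i<n. x i \<in> padic_set p) \<and> (\<forall>i\<ge>n. x i = (\<lambda>_. 0))}"

definition vzero :: zpvec where
  "vzero = (\<lambda>i k. 0)"

definition vadd :: "int \<Rightarrow> zpvec \<Rightarrow> zpvec \<Rightarrow> zpvec" where
  "vadd p x y = (\<lambda>i. padd p (x i) (y i))"

definition smul :: "int \<Rightarrow> padic \<Rightarrow> zpvec \<Rightarrow> zpvec" where
  "smul p a x = (\<lambda>i. pmul p a (x i))"

definition zp_lie_lattice :: "int \<Rightarrow> nat \<Rightarrow> (zpvec \<Rightarrow> zpvec \<Rightarrow> zpvec) \<Rightarrow> bool" where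
  "zp_lie_lattice p n br \<longleftrightarrow>
     (\<forall>x\<in>lat p n. \<forall>y\<in>lat p n. br x y \<in> lat p n) \<and>
     (\<forall>x\<in>lat p n. \<forall>y\<in>lat p n. \<forall>z\<in>lat p n.
        br (vadd p x y) z = vadd p (br x z) (br y z) \<and>
        br x (vadd p y z) = vadd p (br x y) (br x z)) \<and>
     (\<forall>a\<in>padic_set p. \<forall>x\<in>lat p n. \<forall>y\<in>lat p n.
        br (smul p a x) y = smul p a (br x y) \<and>
        br x (smul p a y) = smul p a (br x y)) \<and>
     (\<forall>x\<in>lat p n. br x x = vzero) \<and>
     (\<forall>x\<in>lat p n. \<forall>y\<in>lat p n. \<forall>z\<in>lat p n.
        vadd p (br x (br y z)) (vadd p (br y (br z x)) (br z (br x y))) = vzero)"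

definition submod :: "int \<Rightarrow> nat \<Rightarrow> zpvec set \<Rightarrow> bool" where
  "submod p n M \<longleftrightarrow> M \<subseteq> lat p n \<and> vzero \<in> M \<and>
     (\<forall>x\<in>M. \<forall>y\<in>M. vadd p x y \<in> M) \<and>
     (\<forall>a\<in>padic_set p. \<forall>x\<in>M. smul p a x \<in> M)"

definition span :: "int \<Rightarrow> nat \<Rightarrow> zpvec set \<Rightarrow> zpvec set" where
  "span p n S = \<Inter>{M. submod p n M \<and> S \<subseteq> M}"

definition brk :: "int \<Rightarrow> nat \<Rightarrow> (zpvec \<Rightarrow> zpvec \<Rightarrow> zpvec) \<Rightarrow> zpvec set \<Rightarrow> zpvec set \<Rightarrow> zpvec set" where
  "brk p n br A B = span p n {br a b | a b. a \<in> A \<and> b \<in> B}"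

definition lie_ideal :: "int \<Rightarrow> nat \<Rightarrow> (zpvec \<Rightarrow> zpvec \<Rightarrow> zpvec) \<Rightarrow> zpvec set \<Rightarrow> bool" where
  "lie_ideal p n br M \<longleftrightarrow> submod p n M \<and> brk p n br M (lat p n) \<subseteq> M"

primrec derived :: "int \<Rightarrow> nat \<Rightarrow> (zpvec \<Rightarrow> zpvec \<Rightarrow> zpvec) \<Rightarrow> zpvec set \<Rightarrow> nat \<Rightarrow> zpvec set" where
  "derived p n br M 0 = M"
| "derived p n br M (Suc k) = brk p n br (derived p n br M k) (derived p n br M k)"

definition soluble_ideal :: "int \<Rightarrow> nat \<Rightarrow> (zpvec \<Rightarrow> zpvec \<Rightarrow> zpvec) \<Rightarrow> zpvec set \<Rightarrow> bool" where
  "soluble_ideal p n br M \<longleftrightarrow> lie_ideal p n br M \<and> (\<exists>k. derived p n br M k = {vzero})"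

definition soluble_radical :: "int \<Rightarrow> nat \<Rightarrow> (zpvec \<Rightarrow> zpvec \<Rightarrow> zpvec) \<Rightarrow> zpvec set \<Rightarrow> bool" where
  "soluble_radical p n br R \<longleftrightarrow> soluble_ideal p n br R \<and>
     (\<forall>S. soluble_ideal p n br S \<longrightarrow> S \<subseteq> R)"

text \<open>iso_L(M) = L \<inter> (Q_p \<otimes> M) = {x \<in> L. p^k x \<in> M for some k}.\<close>
definition iso_L :: "int \<Rightarrow> nat \<Rightarrow> zpvec set \<Rightarrow> zpvec set" where
  "iso_L p n M = {x \<in> lat p n. \<exists>k::nat. smul p (pint p (p ^ k)) x \<in> M}"

definition iter_brk :: "int \<Rightarrow> nat \<Rightarrow> (zpvec \<Rightarrow> zpvec \<Rightarrow> zpvec) \<Rightarrow> zpvec set \<Rightarrow> nat \<Rightarrow> zpvec set" where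
  "iter_brk p n br A k = ((\<lambda>B. brk p n br B (lat p n)) ^^ k) A"

definition potent_filtration ::
  "int \<Rightarrow> nat \<Rightarrow> (zpvec \<Rightarrow> zpvec \<Rightarrow> zpvec) \<Rightarrow> zpvec set \<Rightarrow> (nat \<Rightarrow> zpvec set) \<Rightarrow> bool" where
  "potent_filtration p n br M F \<longleftrightarrow>
     (\<forall>i\<ge>1. lie_ideal p n br (F i)) \<and> F 1 = M \<and>
     (\<forall>i\<ge>1. F (Suc i) \<subseteq> F i) \<and>
     (\<Inter>i\<in>{1..}. F i) = {vzero} \<and>
     (\<forall>i\<ge>1. brk p n br (F i) (lat p n) \<subseteq> F (Suc i)) \<and>
     (\<forall>i\<ge>1. iter_brk p n br (F i) (nat (p - 1)) \<subseteq> {smul p (pint p p) x | x. x \<in> F (Suc i)})"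

definition PF_embedded :: "int \<Rightarrow> nat \<Rightarrow> (zpvec \<Rightarrow> zpvec \<Rightarrow> zpvec) \<Rightarrow> zpvec set \<Rightarrow> bool" where
  "PF_embedded p n br M \<longleftrightarrow> lie_ideal p n br M \<and> (\<exists>F. potent_filtration p n br M F)"

definition saturable :: "int \<Rightarrow> nat \<Rightarrow> (zpvec \<Rightarrow> zpvec \<Rightarrow> zpvec) \<Rightarrow> bool" where
  "saturable p n br \<longleftrightarrow> (\<exists>F. potent_filtration p n br (lat p n) F)"

end

theory Submission
  imports Defs
begin

text \<open>
  If \<open>p\<^sup>a x\<close> and \<open>p\<^sup>b y\<close> lie in an ideal \<open>M\<close>, then \<open>p\<^sup>a\<^sup>+\<^sup>b [x, y]\<close> lies in \<open>[M, M]\<close>;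
  hence the isolator of the \<open>k\<close>-th derived ideal of \<open>M\<close> contains the \<open>k\<close>-th derived
  ideal of \<open>iso_L(M)\<close>. Since \<open>L\<close> is torsion free, \<open>iso_L(0) = 0\<close>, so \<open>iso_L(R)\<close> is a soluble
  ideal containing \<open>R\<close> and maximality gives \<open>iso_L(R) = R\<close>.
  For the second part, intersect a potent filtration \<open>(L\<^sub>i)\<close> of \<open>L\<close> with \<open>R\<close>: an element of
  \<open>[R \<inter> L\<^sub>i, L, \<dots>, L] \<subseteq> R\<close> has the form \<open>p x\<close> with \<open>x \<in> L\<^sub>i\<^sub>+\<^sub>1\<close>, and \<open>x \<in> R\<close> because
  \<open>R\<close> is isolated.
\<close>

lemma pmul_pint_pint: "pmul p (pint p a) (pmul p (pint p b) f) = pmul p (pint p (a*b)) f"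
  unfolding pmul_def pint_def
  by (auto simp: mod_mult_right_eq mod_mult_left_eq mult.assoc)

lemma pmul_left_commute: "pmul p a (pmul p b f) = pmul p b (pmul p a f)"
  unfolding pmul_def
  by (auto simp: mod_mult_right_eq mult.left_commute)

lemma pmul_padd: "pmul p a (padd p f g) = padd p (pmul p a f) (pmul p a g)"
  unfolding pmul_def padd_def
  by (auto simp: mod_mult_right_eq mod_add_eq distrib_left)

lemma pint_padic_set: assumes "p > 0" shows "pint p a \<in> padic_set p"
  unfolding padic_set_def pint_def using assms
  by (auto simp: mod_mod_cancel le_imp_power_dvd)

lemma padic_setI:
  assumes "\<And>k. g k = g (Suc k) mod p ^ k" "p > 0"
  shows "g \<in> padic_set p"
proof -
  { fix k
    have "g k = g (Suc k) mod p ^ k" by (rule assms(1))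
    moreover have "p ^ k > 0" using assms(2) by simp
    ultimately have "0 \<le> g k \<and> g k < p ^ k \<and> g k = g (Suc k) mod p ^ k"
      by (metis pos_mod_bound pos_mod_sign) }
  then show ?thesis unfolding padic_set_def by blast
qed

lemma padic_set_compat: "f \<in> padic_set p \<Longrightarrow> f k = f (Suc k) mod p ^ k"
  unfolding padic_set_def by blast

lemma mod_power_Suc_mod: "(x::int) mod p ^ Suc k mod p ^ k = x mod p ^ k"
  by (rule mod_mod_cancel) (simp add: le_imp_power_dvd)

lemma pmul_padic_set: assumes "a \<in> padic_set p" "f \<in> padic_set p" "p > 0"
  shows "pmul p a f \<in> padic_set p"
proof (rule padic_setI[OF _ assms(3)])
  fix k
  have "pmul p a f k = (a (Suc k) mod p^k) * (f (Suc k) mod p^k) mod p ^ k"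
    unfolding pmul_def using padic_set_compat[OF assms(1), of k] padic_set_compat[OF assms(2), of k] by simp
  also have "\<dots> = a (Suc k) * f (Suc k) mod p^k" by (rule mod_mult_eq)
  also have "\<dots> = pmul p a f (Suc k) mod p^k" unfolding pmul_def by (rule mod_power_Suc_mod[symmetric])
  finally show "pmul p a f k = pmul p a f (Suc k) mod p^k" .
qed

lemma padd_padic_set: assumes "a \<in> padic_set p" "f \<in> padic_set p" "p > 0"
  shows "padd p a f \<in> padic_set p"
proof (rule padic_setI[OF _ assms(3)])
  fix k
  have "padd p a f k = ((a (Suc k) mod p^k) + (f (Suc k) mod p^k)) mod p ^ k"
    unfolding padd_def using padic_set_compat[OF assms(1), of k] padic_set_compat[OF assms(2), of k] by simp
  also have "\<dots> = (a (Suc k) + f (Suc k)) mod p^k" by (rule mod_add_eq)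
  also have "\<dots> = padd p a f (Suc k) mod p^k" unfolding padd_def by (rule mod_power_Suc_mod[symmetric])
  finally show "padd p a f k = padd p a f (Suc k) mod p^k" .
qed

lemma pmul_one: assumes "f \<in> padic_set p" shows "pmul p (pint p 1) f = f"
proof
  fix k
  have "0 \<le> f k" "f k < p ^ k" using assms unfolding padic_set_def by blast+
  have "pmul p (pint p 1) f k = (1 mod p ^ k) * f k mod p ^ k" unfolding pmul_def pint_def by simp
  also have "\<dots> = 1 * f k mod p ^ k" by (rule mod_mult_left_eq)
  also have "\<dots> = f k" using \<open>0 \<le> f k\<close> \<open>f k < p ^ k\<close> by simp
  finally show "pmul p (pint p 1) f k = f k" .
qed

lemma padic_set_mod:
  assumes "f \<in> padic_set p" "m \<le> k"
  shows "f m = f k mod p ^ m"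
  using assms(2)
proof (induction k rule: dec_induct)
  case base
  have "0 \<le> f m" "f m < p ^ m" using assms(1) unfolding padic_set_def by blast+
  then show ?case by simp
next
  case (step k)
  have "f k mod p ^ m = f (Suc k) mod p ^ k mod p ^ m"
    using padic_set_compat[OF assms(1), of k] by (rule arg_cong)
  also have "\<dots> = f (Suc k) mod p ^ m"
    using step.hyps by (simp add: mod_mod_cancel le_imp_power_dvd)
  finally show ?case using step.IH by simp
qed

lemma padic_torsion_free:
  assumes "f \<in> padic_set p" "p > 1" "pmul p (pint p (p ^ j)) f = (\<lambda>_. 0)"
  shows "f = (\<lambda>_. 0)"
proof
  fix m
  have "p ^ m dvd f (m + j)"
  proof (cases "m = 0")
    case False
    have "p ^ j mod p ^ (m + j) = p ^ j"
      using assms(2) False by (intro mod_pos_pos_trivial) (auto simp: power_strict_increasing)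
    with assms(3) have "p ^ (m + j) dvd p ^ j * f (m + j)"
      unfolding pmul_def pint_def by (metis mod_eq_0_iff_dvd)
    then have "p ^ j * p ^ m dvd p ^ j * f (m + j)" by (simp add: power_add mult.commute)
    then show ?thesis using assms(2) by simp
  qed simp
  then show "f m = 0" using padic_set_mod[OF assms(1), of m "m + j"] by simp
qed

lemma zero_padic_set: "p > 1 \<Longrightarrow> (\<lambda>_. 0) \<in> padic_set p"
  by (rule padic_setI) auto

lemma smul_smul: "smul p (pint p a) (smul p (pint p b) x) = smul p (pint p (a*b)) x"
  unfolding smul_def by (simp add: pmul_pint_pint)

lemma smul_left_commute: "smul p a (smul p b x) = smul p b (smul p a x)"
  unfolding smul_def by (simp add: pmul_left_commute)

lemma smul_vadd: "smul p a (vadd p x y) = vadd p (smul p a x) (smul p a y)"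
  unfolding smul_def vadd_def by (simp add: pmul_padd)

lemma smul_vzero: "smul p a vzero = vzero"
  unfolding smul_def vzero_def pmul_def by simp

lemma vzero_lat: "p > 1 \<Longrightarrow> vzero \<in> lat p n"
  unfolding lat_def vzero_def using zero_padic_set by auto

lemma smul_lat: assumes "p > 1" "a \<in> padic_set p" "x \<in> lat p n" shows "smul p a x \<in> lat p n"
  using assms pmul_padic_set[of a p] unfolding lat_def smul_def by (auto simp: pmul_def)

lemma vadd_lat: assumes "p > 1" "x \<in> lat p n" "y \<in> lat p n" shows "vadd p x y \<in> lat p n"
  using assms padd_padic_set[of _ p] unfolding lat_def vadd_def by (auto simp: padd_def)

lemma smul_one: assumes "x \<in> lat p n" "p > 1" shows "smul p (pint p 1) x = x"
proof
  fix i
  have "x i \<in> padic_set p" using assms zero_padic_set unfolding lat_def by (cases "i < n") auto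
  then show "smul p (pint p 1) x i = x i" unfolding smul_def by (simp add: pmul_one)
qed

lemma lat_torsion_free: assumes "p > 1" "x \<in> lat p n" "smul p (pint p (p^j)) x = vzero"
  shows "x = vzero"
proof
  fix i
  have "x i \<in> padic_set p" using assms zero_padic_set unfolding lat_def by (cases "i < n") auto
  moreover have "pmul p (pint p (p^j)) (x i) = (\<lambda>_. 0)"
    using assms(3) unfolding smul_def vzero_def by meson
  ultimately show "x i = vzero i" using padic_torsion_free[of "x i" p j] assms(1)
    unfolding vzero_def by auto
qed

lemma lat_submod: assumes "p > 1" shows "submod p n (lat p n)"
  unfolding submod_def using assms vzero_lat vadd_lat smul_lat by blast

lemma submod_lat: "submod p n M \<Longrightarrow> M \<subseteq> lat p n"
  unfolding submod_def by blast

lemma span_least: "submod p n M \<Longrightarrow> S \<subseteq> M \<Longrightarrow> span p n S \<subseteq> M"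
  unfolding span_def by blast

lemma span_sup: "S \<subseteq> span p n S"
  unfolding span_def by blast

lemma span_mono: "S \<subseteq> T \<Longrightarrow> span p n S \<subseteq> span p n T"
  unfolding span_def by blast

lemma span_submod: assumes "p > 1" "S \<subseteq> lat p n" shows "submod p n (span p n S)"
proof -
  have ne: "lat p n \<in> {M. submod p n M \<and> S \<subseteq> M}" using assms lat_submod by blast
  show ?thesis unfolding submod_def
  proof (intro conjI ballI)
    show "span p n S \<subseteq> lat p n" using ne unfolding span_def by blast
    show "vzero \<in> span p n S" unfolding span_def submod_def by blast
    fix x y assume "x \<in> span p n S" "y \<in> span p n S"
    then show "vadd p x y \<in> span p n S" unfolding span_def submod_def by blast
  next
    fix a x assume "a \<in> padic_set p" "x \<in> span p n S"
    then show "smul p a x \<in> span p n S" unfolding span_def submod_def by blast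
  qed
qed

lemma brk_mono: "A \<subseteq> A' \<Longrightarrow> B \<subseteq> B' \<Longrightarrow> brk p n br A B \<subseteq> brk p n br A' B'"
  unfolding brk_def by (rule span_mono) blast

lemma brk_gen: "a \<in> A \<Longrightarrow> b \<in> B \<Longrightarrow> br a b \<in> brk p n br A B"
proof -
  assume "a \<in> A" "b \<in> B"
  then have "br a b \<in> {br a b | a b. a \<in> A \<and> b \<in> B}" by blast
  then show ?thesis unfolding brk_def by (rule subsetD[OF span_sup])
qed

lemma brk_least: "submod p n M \<Longrightarrow> (\<And>a b. a \<in> A \<Longrightarrow> b \<in> B \<Longrightarrow> br a b \<in> M) \<Longrightarrow> brk p n br A B \<subseteq> M"
  unfolding brk_def by (rule span_least) blast+

lemma brk_submod: assumes "p > 1" "zp_lie_lattice p n br" "A \<subseteq> lat p n" "B \<subseteq> lat p n"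
  shows "submod p n (brk p n br A B)"
  unfolding brk_def using assms unfolding zp_lie_lattice_def
  by (intro span_submod) blast+

lemma pint_power_padic_set: "p > 1 \<Longrightarrow> pint p (p^k) \<in> padic_set p"
  by (rule pint_padic_set) simp

lemma smul_pint_power_add: "smul p (pint p (p^(a+b))) x = smul p (pint p (p^a)) (smul p (pint p (p^b)) x)"
  by (simp add: smul_smul power_add)

lemma submod_iso_L: assumes "p > 1" "submod p n M" shows "submod p n (iso_L p n M)"
  unfolding submod_def
proof (intro conjI ballI)
  show "iso_L p n M \<subseteq> lat p n" unfolding iso_L_def by blast
  have "smul p (pint p (p^0)) vzero \<in> M" using assms(2) by (simp add: smul_vzero submod_def)
  then show "vzero \<in> iso_L p n M" unfolding iso_L_def using vzero_lat[OF assms(1)] by blast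
next
  fix x y assume "x \<in> iso_L p n M" "y \<in> iso_L p n M"
  then obtain a b where x: "x \<in> lat p n" "smul p (pint p (p^a)) x \<in> M"
    and y: "y \<in> lat p n" "smul p (pint p (p^b)) y \<in> M" unfolding iso_L_def by blast
  have "smul p (pint p (p^(a+b))) (vadd p x y) =
     vadd p (smul p (pint p (p^b)) (smul p (pint p (p^a)) x)) (smul p (pint p (p^a)) (smul p (pint p (p^b)) y))"
    by (simp add: smul_vadd smul_pint_power_add[symmetric] add.commute)
  also have "\<dots> \<in> M" using assms(1,2) x y pint_power_padic_set[OF assms(1)] unfolding submod_def by blast
  finally show "vadd p x y \<in> iso_L p n M" unfolding iso_L_def using x y vadd_lat assms(1) by blast
next
  fix c x assume c: "c \<in> padic_set p" and "x \<in> iso_L p n M"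
  then obtain a where x: "x \<in> lat p n" "smul p (pint p (p^a)) x \<in> M" unfolding iso_L_def by blast
  have "smul p (pint p (p^a)) (smul p c x) = smul p c (smul p (pint p (p^a)) x)" by (rule smul_left_commute)
  also have "\<dots> \<in> M" using assms(2) c x unfolding submod_def by blast
  finally show "smul p c x \<in> iso_L p n M" unfolding iso_L_def using x c smul_lat assms(1) by blast
qed

lemma subset_iso_L: assumes "p > 1" "M \<subseteq> lat p n" shows "M \<subseteq> iso_L p n M"
proof
  fix x assume "x \<in> M"
  then have "x \<in> lat p n" "smul p (pint p (p^0)) x \<in> M" using assms smul_one[of x p n] by auto
  then show "x \<in> iso_L p n M" unfolding iso_L_def by blast
qed

lemma brk_iso_L_subset: assumes "p > 1" "zp_lie_lattice p n br" "submod p n M"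
  shows "brk p n br (iso_L p n M) (iso_L p n M) \<subseteq> iso_L p n (brk p n br M M)"
proof (rule brk_least)
  have Mlat: "M \<subseteq> lat p n" using assms(3) by (rule submod_lat)
  show "submod p n (iso_L p n (brk p n br M M))"
    using assms Mlat by (intro submod_iso_L brk_submod) auto
  fix x y assume "x \<in> iso_L p n M" "y \<in> iso_L p n M"
  then obtain a b where x: "x \<in> lat p n" "smul p (pint p (p^a)) x \<in> M"
    and y: "y \<in> lat p n" "smul p (pint p (p^b)) y \<in> M" unfolding iso_L_def by blast
  have pa: "pint p (p^a) \<in> padic_set p" and pb: "pint p (p^b) \<in> padic_set p"
    using pint_power_padic_set assms(1) by auto
  have yl: "smul p (pint p (p^b)) y \<in> lat p n" using smul_lat assms(1) pb y by blast
  have "smul p (pint p (p^(a+b))) (br x y) = smul p (pint p (p^a)) (smul p (pint p (p^b)) (br x y))"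
    by (rule smul_pint_power_add)
  also have "\<dots> = smul p (pint p (p^a)) (br x (smul p (pint p (p^b)) y))"
    using assms(2) pb x y unfolding zp_lie_lattice_def by simp
  also have "\<dots> = br (smul p (pint p (p^a)) x) (smul p (pint p (p^b)) y)"
    using assms(2) pa x yl unfolding zp_lie_lattice_def by simp
  also have "\<dots> \<in> brk p n br M M" using x y by (intro brk_gen)
  finally show "br x y \<in> iso_L p n (brk p n br M M)"
    unfolding iso_L_def using assms(2) x y unfolding zp_lie_lattice_def by blast
qed

lemma derived_submod: assumes "p > 1" "zp_lie_lattice p n br" "submod p n M"
  shows "submod p n (derived p n br M k)"
  using assms by (induction k) (auto intro: brk_submod dest: submod_lat)

lemma derived_iso_L_subset: assumes "p > 1" "zp_lie_lattice p n br" "submod p n M"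
  shows "derived p n br (iso_L p n M) k \<subseteq> iso_L p n (derived p n br M k)"
proof (induction k)
  case 0 then show ?case by simp
next
  case (Suc k)
  have "derived p n br (iso_L p n M) (Suc k) \<subseteq>
     brk p n br (iso_L p n (derived p n br M k)) (iso_L p n (derived p n br M k))"
    using Suc by (simp add: brk_mono)
  also have "\<dots> \<subseteq> iso_L p n (derived p n br M (Suc k))"
    using brk_iso_L_subset[OF assms(1,2) derived_submod[OF assms]] by simp
  finally show ?case .
qed

lemma iso_L_zero: assumes "p > 1" shows "iso_L p n {vzero} = {vzero}"
  unfolding iso_L_def using lat_torsion_free[OF assms] vzero_lat[OF assms] smul_one[OF vzero_lat[OF assms] assms]
  by (auto intro!: exI[of _ 0])

lemma lie_ideal_iso_L: assumes "p > 1" "zp_lie_lattice p n br" "lie_ideal p n br R"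
  shows "lie_ideal p n br (iso_L p n R)"
  unfolding lie_ideal_def
proof
  have sR: "submod p n R" using assms(3) unfolding lie_ideal_def by blast
  show "submod p n (iso_L p n R)" using submod_iso_L[OF assms(1) sR] .
  show "brk p n br (iso_L p n R) (lat p n) \<subseteq> iso_L p n R"
  proof (rule brk_least)
    show "submod p n (iso_L p n R)" using submod_iso_L[OF assms(1) sR] .
    fix x y assume "x \<in> iso_L p n R" "y \<in> lat p n"
    then obtain a where x: "x \<in> lat p n" "smul p (pint p (p^a)) x \<in> R" unfolding iso_L_def by blast
    have "smul p (pint p (p^a)) (br x y) = br (smul p (pint p (p^a)) x) y"
      using assms(2) pint_power_padic_set[OF assms(1)] x \<open>y \<in> lat p n\<close> unfolding zp_lie_lattice_def by simp
    also have "\<dots> \<in> R" using assms(3) x \<open>y \<in> lat p n\<close> brk_gen unfolding lie_ideal_def by blast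
    finally show "br x y \<in> iso_L p n R"
      unfolding iso_L_def using assms(2) x \<open>y \<in> lat p n\<close> unfolding zp_lie_lattice_def by blast
  qed
qed

lemma soluble_ideal_iso_L:
  assumes "p > 1" "zp_lie_lattice p n br" "soluble_ideal p n br M"
  shows "soluble_ideal p n br (iso_L p n M)"
proof -
  have ideal: "lie_ideal p n br M" and "\<exists>k. derived p n br M k = {vzero}"
    using assms(3) unfolding soluble_ideal_def by auto
  then obtain k where k: "derived p n br M k = {vzero}" by blast
  have sM: "submod p n M" using ideal unfolding lie_ideal_def by blast
  have "derived p n br (iso_L p n M) k \<subseteq> {vzero}"
    using derived_iso_L_subset[OF assms(1,2) sM, of k] k iso_L_zero[OF assms(1)] by simp
  moreover have "vzero \<in> derived p n br (iso_L p n M) k"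
    using derived_submod[OF assms(1,2) submod_iso_L[OF assms(1) sM]] unfolding submod_def by blast
  ultimately have "derived p n br (iso_L p n M) k = {vzero}" by blast
  then show ?thesis unfolding soluble_ideal_def using lie_ideal_iso_L[OF assms(1,2) ideal] by blast
qed

lemma soluble_radical_isolated:
  assumes "p > 1" "zp_lie_lattice p n br" "soluble_radical p n br R"
  shows "iso_L p n R = R"
proof
  have "soluble_ideal p n br R" using assms(3) unfolding soluble_radical_def by blast
  then show "iso_L p n R \<subseteq> R"
    using soluble_ideal_iso_L[OF assms(1,2)] assms(3) unfolding soluble_radical_def by blast
  have "R \<subseteq> lat p n" using assms(3)
    unfolding soluble_radical_def soluble_ideal_def lie_ideal_def submod_def by blast
  then show "R \<subseteq> iso_L p n R" by (rule subset_iso_L[OF assms(1)])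
qed

lemma iter_brk_mono: "A \<subseteq> B \<Longrightarrow> iter_brk p n br A k \<subseteq> iter_brk p n br B k"
proof (induction k)
  case 0 then show ?case by (simp add: iter_brk_def)
next
  case (Suc k)
  then have "brk p n br (iter_brk p n br A k) (lat p n) \<subseteq> brk p n br (iter_brk p n br B k) (lat p n)"
    by (intro brk_mono) auto
  then show ?case by (simp add: iter_brk_def)
qed

lemma iter_brk_lie_ideal_subset: "lie_ideal p n br R \<Longrightarrow> iter_brk p n br R k \<subseteq> R"
proof (induction k)
  case 0 then show ?case by (simp add: iter_brk_def)
next
  case (Suc k)
  have "iter_brk p n br R (Suc k) = brk p n br (iter_brk p n br R k) (lat p n)"
    by (simp add: iter_brk_def)
  also have "\<dots> \<subseteq> brk p n br R (lat p n)" using Suc by (intro brk_mono) auto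
  also have "\<dots> \<subseteq> R" using Suc.prems unfolding lie_ideal_def by blast
  finally show ?case .
qed

lemma submod_Int: "submod p n A \<Longrightarrow> submod p n B \<Longrightarrow> submod p n (A \<inter> B)"
  unfolding submod_def by blast

lemma lie_ideal_Int: "lie_ideal p n br A \<Longrightarrow> lie_ideal p n br B \<Longrightarrow> lie_ideal p n br (A \<inter> B)"
  unfolding lie_ideal_def using submod_Int brk_mono[of "A \<inter> B" A "lat p n" "lat p n" p n br]
    brk_mono[of "A \<inter> B" B "lat p n" "lat p n" p n br] by blast

lemma potent_filtration_Int_isolated:
  assumes R: "lie_ideal p n br R" "iso_L p n R = R"
    and F: "potent_filtration p n br (lat p n) F"
  shows "potent_filtration p n br R (\<lambda>i. R \<inter> F i)"
proof -
  have Fi: "\<And>i. i \<ge> 1 \<Longrightarrow> lie_ideal p n br (F i)" and F1: "F 1 = lat p n"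
    and Fd: "\<And>i. i \<ge> 1 \<Longrightarrow> F (Suc i) \<subseteq> F i"
    and Fint: "(\<Inter>i\<in>{1..}. F i) = {vzero}"
    and Fb: "\<And>i. i \<ge> 1 \<Longrightarrow> brk p n br (F i) (lat p n) \<subseteq> F (Suc i)"
    and Fp: "\<And>i. i \<ge> 1 \<Longrightarrow>
      iter_brk p n br (F i) (nat (p - 1)) \<subseteq> {smul p (pint p p) x | x. x \<in> F (Suc i)}"
    using F unfolding potent_filtration_def by auto
  have RL: "R \<subseteq> lat p n" and R0: "vzero \<in> R"
    using R(1) unfolding lie_ideal_def submod_def by blast+
  have step: "iter_brk p n br (R \<inter> F i) (nat (p - 1))
      \<subseteq> {smul p (pint p p) x | x. x \<in> R \<inter> F (Suc i)}" if i: "i \<ge> 1" for i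
  proof
    fix z assume z: "z \<in> iter_brk p n br (R \<inter> F i) (nat (p - 1))"
    have "z \<in> R"
      using z iter_brk_mono[of "R \<inter> F i" R] iter_brk_lie_ideal_subset[OF R(1)] by blast
    moreover have "z \<in> {smul p (pint p p) x | x. x \<in> F (Suc i)}"
      using z iter_brk_mono[of "R \<inter> F i" "F i"] Fp[OF i] by blast
    ultimately obtain x where x: "x \<in> F (Suc i)" "z = smul p (pint p p) x" "z \<in> R" by blast
    have "x \<in> lat p n" using x(1) Fi[of "Suc i"] unfolding lie_ideal_def submod_def by auto
    \<comment> \<open>\<open>R\<close> is isolated, so \<open>p x \<in> R\<close> forces \<open>x \<in> R\<close>.\<close>
    then have "x \<in> iso_L p n R" unfolding iso_L_def using x by (auto intro!: exI[of _ 1])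
    then show "z \<in> {smul p (pint p p) x | x. x \<in> R \<inter> F (Suc i)}" using R(2) x by blast
  qed
  have "brk p n br (R \<inter> F i) (lat p n) \<subseteq> R \<inter> F (Suc i)" if "i \<ge> 1" for i
  proof -
    have "brk p n br (R \<inter> F i) (lat p n) \<subseteq> brk p n br R (lat p n) \<inter> brk p n br (F i) (lat p n)"
      using brk_mono[of "R \<inter> F i" _ "lat p n" "lat p n"] by blast
    then show ?thesis using R(1) Fb[OF that] unfolding lie_ideal_def by blast
  qed
  moreover have "(\<Inter>i\<in>{1..}. R \<inter> F i) = {vzero}"
  proof
    show "(\<Inter>i\<in>{1..}. R \<inter> F i) \<subseteq> {vzero}" using Fint by blast
    show "{vzero} \<subseteq> (\<Inter>i\<in>{1..}. R \<inter> F i)" using Fint R0 by auto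
  qed
  moreover have "R \<inter> F 1 = R" using F1 RL by blast
  ultimately show ?thesis
    unfolding potent_filtration_def using lie_ideal_Int[OF R(1) Fi] Fd step by blast
qed

theorem mainTheorem12:
  fixes p :: int and n :: nat and br :: "zpvec \<Rightarrow> zpvec \<Rightarrow> zpvec" and R :: "zpvec set"
  assumes "prime p" and "odd p"
    and "zp_lie_lattice p n br"
    and "soluble_radical p n br R"
  shows "iso_L p n R = R \<and> (saturable p n br \<longrightarrow> PF_embedded p n br R)"
proof
  have "p > 1" using assms(1) by (simp add: prime_gt_1_int)
  then show iso: "iso_L p n R = R" by (rule soluble_radical_isolated[OF _ assms(3,4)])
  have ideal: "lie_ideal p n br R"
    using assms(4) unfolding soluble_radical_def soluble_ideal_def by blast
  show "saturable p n br \<longrightarrow> PF_embedded p n br R"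
    using potent_filtration_Int_isolated[OF ideal iso]
    unfolding saturable_def PF_embedded_def using ideal by blast
qed

end
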